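(* Let $d,n\in\mathbb{N}$, let $\mathcal{P}$ be a unit hypercube partition of $\mathbb{R}^{d}$, and let $X_{1},\ldots,X_{n}\in\mathcal{P}$ be such that $X_i$ and $X_j$ are adjacent for all $i,j\in[n]$. Then there is a point $\vec{p}\in\mathbb{R}^{d}$ such that $\vec{p}\in\overline{X_{i}}$ for all $i\in[n]$.
   Context: A unit hypercube is a set $\vec{a}+[0,1)^d$ with $\vec{a}\in\mathbb{R}^d$; a unit hypercube partition is a partition of $\mathbb{R}^d$ all of whose members are unit hypercubes. $\overline{X}$ denotes closure; $X$ and $Y$ are adjacent if $\overline{X}\cap\overline{Y}\ne\emptyset$. *)

theory Defs
  imports "HOL-Analysis.Analysis"
begin

definition unit_hypercube :: "real^'d \<Rightarrow> (real^'d) set" where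
  "unit_hypercube a = {x. \<forall>i. a $ i \<le> x $ i \<and> x $ i < a $ i + 1}"

definition is_unit_hypercube :: "(real^'d) set \<Rightarrow> bool" where
  "is_unit_hypercube X \<longleftrightarrow> (\<exists>a. X = unit_hypercube a)"

definition unit_hypercube_partition :: "(real^'d) set set \<Rightarrow> bool" where
  "unit_hypercube_partition P \<longleftrightarrow>
     \<Union>P = UNIV \<and>
     (\<forall>X\<in>P. \<forall>Y\<in>P. X \<noteq> Y \<longrightarrow> X \<inter> Y = {}) \<and>
     (\<forall>X\<in>P. is_unit_hypercube X)"

definition adjacent :: "'a::topological_space set \<Rightarrow> 'a set \<Rightarrow> bool" where
  "adjacent X Y \<longleftrightarrow> closure X \<inter> closure Y \<noteq> {}"

end

theory Submission
  imports Defs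
begin

text \<open>Only the shape of the members matters, not that they partition the space: the closure of
  a unit hypercube is a closed axis-parallel box, and pairwise intersecting closed boxes have a
  common point. Indeed, in each coordinate every lower end lies below every upper end, so the
  largest lower end lies in all the coordinate intervals (Helly's theorem on the line).\<close>

lemma closure_unit_hypercube: "closure (unit_hypercube a) = cbox a (a + 1)"
proof -
  have "box a (a + 1) \<subseteq> unit_hypercube a" "unit_hypercube a \<subseteq> cbox a (a + 1)"
    by (auto simp: unit_hypercube_def mem_box_cart less_imp_le)
  moreover have "box a (a + 1) \<noteq> {}"
    by (simp add: interval_ne_empty_cart)
  ultimately show ?thesis
    by (metis closure_box closure_closed closed_cbox closure_mono subset_antisym)
qed

lemma Inter_cboxes_nonempty:
  fixes lo hi :: "'i \<Rightarrow> 'a::euclidean_space"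
  assumes "finite I"
    and meet: "\<And>i j. i \<in> I \<Longrightarrow> j \<in> I \<Longrightarrow> cbox (lo i) (hi i) \<inter> cbox (lo j) (hi j) \<noteq> {}"
  shows "(\<Inter>i\<in>I. cbox (lo i) (hi i)) \<noteq> {}"
proof (cases "I = {}")
  case False
  have lo_le_hi: "lo i \<bullet> k \<le> hi j \<bullet> k" if ij: "i \<in> I" "j \<in> I" and k: "k \<in> Basis" for i j k
  proof -
    obtain x where "x \<in> cbox (lo i) (hi i)" "x \<in> cbox (lo j) (hi j)"
      using meet[OF ij] by blast
    with k show ?thesis
      unfolding mem_box by (meson order_trans)
  qed
  define p where "p = (\<Sum>k\<in>Basis. Max ((\<lambda>i. lo i \<bullet> k) ` I) *\<^sub>R k)"
  have "p \<in> cbox (lo j) (hi j)" if "j \<in> I" for j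
    unfolding mem_box
  proof (intro ballI conjI)
    fix k :: 'a assume "k \<in> Basis"
    then have p_k: "p \<bullet> k = Max ((\<lambda>i. lo i \<bullet> k) ` I)"
      by (simp add: p_def)
    show "lo j \<bullet> k \<le> p \<bullet> k"
      using \<open>finite I\<close> \<open>j \<in> I\<close> by (simp add: p_k)
    show "p \<bullet> k \<le> hi j \<bullet> k"
      using \<open>finite I\<close> False lo_le_hi \<open>j \<in> I\<close> \<open>k \<in> Basis\<close> by (simp add: p_k)
  qed
  then show ?thesis by blast
qed simp

theorem mainTheorem13:
  fixes P :: "(real^'d) set set" and X :: "nat \<Rightarrow> (real^'d) set" and n :: nat
  assumes "unit_hypercube_partition P"
    and "\<forall>i\<in>{1..n}. X i \<in> P"
    and "\<forall>i\<in>{1..n}. \<forall>j\<in>{1..n}. adjacent (X i) (X j)"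
  shows "\<exists>p::real^'d. \<forall>i\<in>{1..n}. p \<in> closure (X i)"
proof -
  have "\<forall>i\<in>{1..n}. \<exists>a. X i = unit_hypercube a"
    using assms(1,2) by (auto simp: unit_hypercube_partition_def is_unit_hypercube_def)
  then obtain a where "\<And>i. i \<in> {1..n} \<Longrightarrow> X i = unit_hypercube (a i)"
    by metis
  then have closure_X: "\<And>i. i \<in> {1..n} \<Longrightarrow> closure (X i) = cbox (a i) (a i + 1)"
    by (simp add: closure_unit_hypercube)
  have "(\<Inter>i\<in>{1..n}. cbox (a i) (a i + 1)) \<noteq> {}"
  proof (rule Inter_cboxes_nonempty)
    fix i j assume "i \<in> {1..n}" "j \<in> {1..n}"
    then show "cbox (a i) (a i + 1) \<inter> cbox (a j) (a j + 1) \<noteq> {}"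
      using assms(3) closure_X by (simp add: adjacent_def)
  qed simp
  then show ?thesis
    using closure_X by auto
qed

end
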